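(* Let $\varphi,\psi\in G$ satisfy $\gamma_{\psi/\varphi}>0$, and let $E$ and $F$ be symmetric spaces on $[0,1]$ with fundamental functions $\varphi$ and $\psi$, respectively. Then $E\subset F$ and the identity inclusion operator $I:E\to F$ is disjointly strictly singular.
   Context: All functions are Lebesgue measurable on $[0,1]$, $\mu$ is Lebesgue measure. A symmetric space (SS) on $[0,1]$ is a Banach space $E$ of measurable functions on $[0,1]$ such that: (1) if $y\in E$ and $|x(t)|\le |y(t)|$ then $x\in E$ and $\|x\|\le\|y\|$; (2) if $y\in E$ and $x,y$ are equimeasurable (i.e. $\mu\{|x|>\tau\}=\mu\{|y|>\tau\}$ for all $\tau>0$) then $x\in E$ and $\|x\|=\|y\|$. The fundamental function of $E$ is $f_E(t)=\|\chi_{(0,t)}\|_E$. $G$ denotes the class of all positive increasing concave functions on $(0,1]$. For a positive function $f$ on $(0,1]$, its dilation function is $\mathcal M_f(t)=\sup\{f(st)/f(s):0<s\le\min(1,1/t)\}$ for $t>0$, and its lower dilation index is $\gamma_f=\lim_{t\to0}\ln\mathcal M_f(t)/\ln t$. A bounded linear operator $T$ from a Banach lattice $X$ into a Banach space $Y$ is disjointly strictly singular (DSS) if there is no sequence of nonzero pairwise disjoint elements $x_n\in X$ such that the restriction of $T$ to their closed linear span $[x_n]$ is an isomorphism (onto its image). *)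

theory Defs
  imports "HOL-Analysis.Analysis"
begin

abbreviation mu01 :: "real measure" where
  "mu01 \<equiv> lebesgue_on {0..1}"

text \<open>A symmetric space on [0,1] is given by a set E of (representatives of)
  measurable real functions together with a norm N on E (functions equal a.e.
  are identified via the norm).\<close>
definition symmetric_space :: "(real \<Rightarrow> real) set \<Rightarrow> ((real \<Rightarrow> real) \<Rightarrow> real) \<Rightarrow> bool" where
  "symmetric_space E N \<longleftrightarrow>
     E \<subseteq> borel_measurable mu01 \<and>
     (\<lambda>t. 0) \<in> E \<and>
     (\<forall>x\<in>E. \<forall>y\<in>E. (\<lambda>t. x t + y t) \<in> E) \<and>
     (\<forall>x\<in>E. \<forall>c::real. (\<lambda>t. c * x t) \<in> E) \<and>
     (\<forall>x\<in>E. \<forall>y\<in>E. N (\<lambda>t. x t + y t) \<le> N x + N y) \<and>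
     (\<forall>x\<in>E. \<forall>c::real. N (\<lambda>t. c * x t) = \<bar>c\<bar> * N x) \<and>
     (\<forall>x\<in>E. N x = 0 \<longleftrightarrow> (AE t in mu01. x t = 0)) \<and>
     \<comment> \<open>completeness (Banach space)\<close>
     (\<forall>u::nat \<Rightarrow> real \<Rightarrow> real. (\<forall>n. u n \<in> E) \<longrightarrow>
        (\<forall>e>0. \<exists>M. \<forall>m\<ge>M. \<forall>n\<ge>M. N (\<lambda>t. u m t - u n t) < e) \<longrightarrow>
        (\<exists>x\<in>E. (\<lambda>n. N (\<lambda>t. u n t - x t)) \<longlonglongrightarrow> 0)) \<and>
     \<comment> \<open>(1) ideal property\<close>
     (\<forall>x y. y \<in> E \<longrightarrow> x \<in> borel_measurable mu01 \<longrightarrow>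
        (AE t in mu01. \<bar>x t\<bar> \<le> \<bar>y t\<bar>) \<longrightarrow> x \<in> E \<and> N x \<le> N y) \<and>
     \<comment> \<open>(2) rearrangement invariance\<close>
     (\<forall>x y. y \<in> E \<longrightarrow> x \<in> borel_measurable mu01 \<longrightarrow>
        (\<forall>\<tau>>0. measure mu01 {t\<in>{0..1}. \<bar>x t\<bar> > \<tau>} = measure mu01 {t\<in>{0..1}. \<bar>y t\<bar> > \<tau>}) \<longrightarrow>
        x \<in> E \<and> N x = N y)"

definition has_fundamental_function ::
    "(real \<Rightarrow> real) set \<Rightarrow> ((real \<Rightarrow> real) \<Rightarrow> real) \<Rightarrow> (real \<Rightarrow> real) \<Rightarrow> bool" where
  "has_fundamental_function E N f \<longleftrightarrow>
     (\<forall>t\<in>{0<..1}. (indicator {0<..<t} :: real \<Rightarrow> real) \<in> E \<and> N (indicator {0<..<t}) = f t)"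

definition classG :: "(real \<Rightarrow> real) set" where
  "classG = {f. (\<forall>t\<in>{0<..1}. f t > 0) \<and> mono_on {0<..1} f \<and> concave_on {0<..1} f}"

definition dilation_function :: "(real \<Rightarrow> real) \<Rightarrow> real \<Rightarrow> real" where
  "dilation_function f t = Sup {f (s * t) / f s | s. 0 < s \<and> s \<le> min 1 (1 / t)}"

definition lower_dilation_index :: "(real \<Rightarrow> real) \<Rightarrow> real" where
  "lower_dilation_index f = Lim (at_right 0) (\<lambda>t. ln (dilation_function f t) / ln t)"

definition lin_combs :: "(nat \<Rightarrow> real \<Rightarrow> real) \<Rightarrow> (real \<Rightarrow> real) set" where
  "lin_combs xs = {(\<lambda>t. \<Sum>i<n. c i * xs i t) | n c. True}"

definition closed_span :: "(real \<Rightarrow> real) set \<Rightarrow> ((real \<Rightarrow> real) \<Rightarrow> real) \<Rightarrow> (nat \<Rightarrow> real \<Rightarrow> real) \<Rightarrow> (real \<Rightarrow> real) set" where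
  "closed_span E N xs = {x\<in>E. \<forall>e>0. \<exists>y\<in>lin_combs xs. N (\<lambda>t. x t - y t) < e}"

definition bounded_inclusion where
  "bounded_inclusion E NE F NF \<longleftrightarrow> E \<subseteq> F \<and> (\<exists>C. \<forall>x\<in>E. NF x \<le> C * NE x)"

text \<open>The inclusion E into F is disjointly strictly singular: there is no sequence of nonzero
  pairwise disjoint elements on whose closed linear span the inclusion is an isomorphism
  onto its image (i.e. bounded below).\<close>
definition inclusion_DSS where
  "inclusion_DSS E NE F NF \<longleftrightarrow>
     \<not> (\<exists>xs::nat \<Rightarrow> real \<Rightarrow> real.
          (\<forall>n. xs n \<in> E) \<and>
          (\<forall>n. \<not> (AE t in mu01. xs n t = 0)) \<and>
          (\<forall>m n. m \<noteq> n \<longrightarrow> (AE t in mu01. xs m t * xs n t = 0)) \<and>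
          (\<exists>c>0. \<forall>x\<in>closed_span E NE xs. NF x \<ge> c * NE x))"

end

theory Submission
  imports Defs
begin

(* Since the lower dilation index of psi/phi is positive, psi a <= C a^delta phi a on (0,1] for
   some delta > 0 (Fekete's argument for the submultiplicative dilation function).
   Let y in E have support of measure at most m and put c = ||y||_E / phi m. On the level set
   A_i = {|y| > c 2^i} the ideal property gives c 2^i phi (mu A_i) <= ||y||_E, so concavity of phi
   gives mu A_i <= m 2^-i, and the F-norm of c 2^i 1_(A_i) is
   c 2^i psi (mu A_i) <= C (m 2^-i)^delta ||y||_E. The dyadic majorant of |y| built from these
   pieces converges in F by completeness, hence ||y||_F <= K m^delta ||y||_E. For m = 1 this is
   the bounded inclusion. Pairwise disjoint nonzero functions have supports of arbitrarily small
   measure, so no estimate ||x||_F >= c ||x||_E can hold on their span. *)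

section \<open>Symmetric spaces on [0,1]\<close>

lemma finite_measure_mu01: "finite_measure mu01"
  by (rule finite_measure_lebesgue_on) simp

lemma measure_mu01_le_1: "measure mu01 A \<le> 1"
proof -
  interpret finite_measure mu01 by (rule finite_measure_mu01)
  have "measure mu01 A \<le> measure mu01 (space mu01)" by (rule bounded_measure)
  also have "\<dots> = 1" by (subst measure_restrict_space) auto
  finally show ?thesis .
qed

lemma sets_mu01_Collect:
  assumes "Measurable.pred borel P" and "y \<in> borel_measurable mu01"
  shows "{t\<in>{0..1}. P (y t)} \<in> sets mu01"
proof -
  have "{t\<in>space mu01. P (y t)} \<in> sets mu01" using assms by measurable
  then show ?thesis by simp
qed

lemma (in finite_measure) AE_disjoint_sequence_small:
  fixes X :: "nat \<Rightarrow> 'a set"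
  assumes X: "\<And>n. X n \<in> sets M"
    and disjoint: "\<And>m n. m \<noteq> n \<Longrightarrow> AE x in M. x \<notin> X m \<or> x \<notin> X n"
    and e: "0 < e"
  obtains n where "measure M (X n) < e"
proof (rule ccontr)
  assume "\<not> thesis"
  with that have ge: "e \<le> measure M (X n)" for n by (meson not_le)
  obtain k :: nat where k: "measure M (space M) < real k * e"
    using reals_Archimedean3[OF e] by blast
  have "real k * e \<le> (\<Sum>n<k. measure M (X n))"
    using sum_mono[of "{..<k}" "\<lambda>_. e", OF ge] by simp
  also have "\<dots> = measure M (\<Union>n<k. X n)"
    using X disjoint by (intro measure_UNION_AE[symmetric]) (auto simp: pairwise_def fmeasurable_def less_top[symmetric])
  also have "\<dots> \<le> measure M (space M)"
    using X by (intro bounded_measure)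
  finally show False using k by simp
qed

locale sym_space =
  fixes E :: "(real \<Rightarrow> real) set" and N :: "(real \<Rightarrow> real) \<Rightarrow> real"
  assumes sym: "symmetric_space E N"
begin

lemma subset_measurable: "E \<subseteq> borel_measurable mu01"
  using sym unfolding symmetric_space_def by (elim conjE) assumption

lemma zero_mem: "(\<lambda>t. 0) \<in> E"
  using sym unfolding symmetric_space_def by (elim conjE) assumption

lemma add_mem [rule_format]: "\<forall>x\<in>E. \<forall>y\<in>E. (\<lambda>t. x t + y t) \<in> E"
  using sym unfolding symmetric_space_def by (elim conjE) assumption

lemma scale_mem [rule_format]: "\<forall>x\<in>E. \<forall>c. (\<lambda>t. c * x t) \<in> E"
  using sym unfolding symmetric_space_def by (elim conjE) assumption

lemma norm_add_le [rule_format]: "\<forall>x\<in>E. \<forall>y\<in>E. N (\<lambda>t. x t + y t) \<le> N x + N y"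
  using sym unfolding symmetric_space_def by (elim conjE) assumption

lemma norm_scale [rule_format]: "\<forall>x\<in>E. \<forall>c. N (\<lambda>t. c * x t) = \<bar>c\<bar> * N x"
  using sym unfolding symmetric_space_def by (elim conjE) assumption

lemma norm_eq_0_iff [rule_format]: "\<forall>x\<in>E. N x = 0 \<longleftrightarrow> (AE t in mu01. x t = 0)"
  using sym unfolding symmetric_space_def by (elim conjE) assumption

lemma complete [rule_format]:
  "\<forall>u. (\<forall>n. u n \<in> E) \<longrightarrow> (\<forall>e>0. \<exists>M. \<forall>m\<ge>M. \<forall>n\<ge>M. N (\<lambda>t. u m t - u n t) < e) \<longrightarrow>
     (\<exists>x\<in>E. (\<lambda>n. N (\<lambda>t. u n t - x t)) \<longlonglongrightarrow> 0)"
  using sym unfolding symmetric_space_def by (elim conjE) assumption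

lemma ideal [rule_format]:
  "\<forall>x y. y \<in> E \<longrightarrow> x \<in> borel_measurable mu01 \<longrightarrow> (AE t in mu01. \<bar>x t\<bar> \<le> \<bar>y t\<bar>) \<longrightarrow>
     x \<in> E \<and> N x \<le> N y"
  using sym unfolding symmetric_space_def by (elim conjE) assumption

lemma rearrangement_invariant [rule_format]:
  "\<forall>x y. y \<in> E \<longrightarrow> x \<in> borel_measurable mu01 \<longrightarrow>
     (\<forall>\<tau>>0. measure mu01 {t\<in>{0..1}. \<bar>x t\<bar> > \<tau>} = measure mu01 {t\<in>{0..1}. \<bar>y t\<bar> > \<tau>}) \<longrightarrow>
     x \<in> E \<and> N x = N y"
  using sym unfolding symmetric_space_def by (elim conjE) assumption

lemma mem_measurable: "x \<in> E \<Longrightarrow> x \<in> borel_measurable mu01"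
  using subset_measurable by blast

lemma norm_zero: "N (\<lambda>t. 0) = 0"
  using norm_scale[OF zero_mem, of 0] by simp

lemma diff_mem: "x \<in> E \<Longrightarrow> y \<in> E \<Longrightarrow> (\<lambda>t. x t - y t) \<in> E"
  using add_mem[OF _ scale_mem[of y "-1"]] by simp

lemma norm_nonneg:
  assumes "x \<in> E" shows "0 \<le> N x"
proof -
  have "0 = N (\<lambda>t. x t + (-1) * x t)" using norm_zero by simp
  also have "\<dots> \<le> N x + N (\<lambda>t. (-1) * x t)" using assms by (intro norm_add_le scale_mem)
  also have "\<dots> = 2 * N x" using norm_scale[OF assms, of "-1"] by simp
  finally show ?thesis by simp
qed

lemma norm_minus_commute:
  assumes "x \<in> E" and "y \<in> E" shows "N (\<lambda>t. x t - y t) = N (\<lambda>t. y t - x t)"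
  using norm_scale[OF diff_mem[OF assms], of "-1"] by simp

lemma sum_mem_norm_le:
  "finite I \<Longrightarrow> (\<And>j. j \<in> I \<Longrightarrow> f j \<in> E) \<Longrightarrow>
    (\<lambda>t. \<Sum>j\<in>I. f j t) \<in> E \<and> N (\<lambda>t. \<Sum>j\<in>I. f j t) \<le> (\<Sum>j\<in>I. N (f j))"
proof (induction I rule: finite_induct)
  case empty
  then show ?case using zero_mem norm_zero by simp
next
  case (insert a I)
  then have "f a \<in> E" and "(\<lambda>t. \<Sum>j\<in>I. f j t) \<in> E" and "N (\<lambda>t. \<Sum>j\<in>I. f j t) \<le> (\<Sum>j\<in>I. N (f j))"
    by auto
  with insert.hyps show ?case
    using add_mem norm_add_le[of "f a" "\<lambda>t. \<Sum>j\<in>I. f j t"] by auto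
qed

lemma null_mem:
  assumes "x \<in> borel_measurable mu01" and "AE t in mu01. x t = 0"
  shows "x \<in> E \<and> N x = 0"
proof -
  have "AE t in mu01. \<bar>x t\<bar> \<le> \<bar>(\<lambda>t. 0) t\<bar>" using assms(2) by eventually_elim simp
  then have "x \<in> E" using ideal[OF zero_mem assms(1)] by blast
  with assms(2) show ?thesis using norm_eq_0_iff by blast
qed

lemma summable_norms_converge:
  fixes f :: "nat \<Rightarrow> real \<Rightarrow> real"
  assumes f: "\<And>j. f j \<in> E" and bound: "\<And>n. (\<Sum>j<n. N (f j)) \<le> K"
  obtains y where "y \<in> E" and "(\<lambda>n. N (\<lambda>t. (\<Sum>j<n. f j t) - y t)) \<longlonglongrightarrow> 0"
proof -
  define S where "S n = (\<lambda>t. \<Sum>j<n. f j t)" for n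
  have S: "S n \<in> E" for n unfolding S_def using sum_mem_norm_le f by blast
  have tail: "N (\<lambda>t. S m t - S n t) \<le> (\<Sum>j\<in>{n..<m}. N (f j))" if "n \<le> m" for m n
  proof -
    have "(\<lambda>t. S m t - S n t) = (\<lambda>t. \<Sum>j\<in>{n..<m}. f j t)"
      unfolding S_def using that by (simp add: sum_diff_nat_ivl flip: atLeast0LessThan)
    then show ?thesis using sum_mem_norm_le[of "{n..<m}" f] f by simp
  qed
  have "summable (\<lambda>j. N (f j))"
    using norm_nonneg[OF f] bound by (intro summableI_nonneg_bounded) auto
  then have "\<exists>M. \<forall>m\<ge>M. \<forall>n\<ge>M. N (\<lambda>t. S m t - S n t) < e" if "e > 0" for e
  proof -
    from \<open>summable _\<close> \<open>e > 0\<close> obtain M where M: "\<And>m n. M \<le> m \<Longrightarrow> \<bar>\<Sum>j = m..<n. N (f j)\<bar> < e"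
      unfolding summable_Cauchy by (metis real_norm_def)
    have small: "N (\<lambda>t. S m t - S n t) < e" if "M \<le> n" "n \<le> m" for m n
      using tail[OF that(2)] M[OF that(1), of m] by simp
    show ?thesis
      by (metis small nle_le norm_minus_commute[OF S S])
  qed
  with complete[of S] S that show ?thesis unfolding S_def by blast
qed

lemma AE_incseq_le_limit:
  assumes S: "\<And>n. S n \<in> E" and y: "y \<in> E" and mono: "\<And>m n t. m \<le> n \<Longrightarrow> S m t \<le> S n t"
    and lim: "(\<lambda>n. N (\<lambda>t. S n t - y t)) \<longlonglongrightarrow> 0"
  shows "AE t in mu01. \<forall>n. S n t \<le> y t"
proof -
  have "AE t in mu01. S m t \<le> y t" for m
  proof -
    define z where "z t = max (S m t - y t) 0" for t
    have z: "z \<in> borel_measurable mu01"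
      unfolding z_def using mem_measurable[OF S] mem_measurable[OF y] by measurable
    have zn: "z \<in> E \<and> N z \<le> N (\<lambda>t. S n t - y t)" if "m \<le> n" for n
    proof (intro ideal[OF diff_mem[OF S y] z] AE_I2)
      show "\<bar>z t\<bar> \<le> \<bar>S n t - y t\<bar>" for t using mono[OF that, of t] by (simp add: z_def)
    qed
    then have "N z \<le> 0" by (intro LIMSEQ_le_const[OF lim]) auto
    then have "AE t in mu01. z t = 0" using zn norm_nonneg norm_eq_0_iff by force
    then show ?thesis by eventually_elim (simp add: z_def)
  qed
  then show ?thesis by (simp add: AE_all_countable)
qed

lemma norm_le_of_tendsto:
  assumes S: "\<And>n. S n \<in> E" and y: "y \<in> E" and bound: "\<And>n. N (S n) \<le> K"
    and lim: "(\<lambda>n. N (\<lambda>t. S n t - y t)) \<longlonglongrightarrow> 0"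
  shows "N y \<le> K"
proof (rule LIMSEQ_le_const)
  show "(\<lambda>n. K + N (\<lambda>t. S n t - y t)) \<longlonglongrightarrow> K" using tendsto_add[OF tendsto_const lim] by simp
  have "N y \<le> K + N (\<lambda>t. S n t - y t)" for n
  proof -
    have "N y \<le> N (S n) + N (\<lambda>t. y t - S n t)"
      using norm_add_le[OF S diff_mem[OF y S], of n n] by simp
    then show ?thesis using bound[of n] norm_minus_commute[OF S y, of n] by simp
  qed
  then show "\<exists>M. \<forall>n\<ge>M. N y \<le> K + N (\<lambda>t. S n t - y t)" by blast
qed

lemma majorant_series_bound:
  fixes f :: "nat \<Rightarrow> real \<Rightarrow> real"
  assumes f: "\<And>j. f j \<in> E" and f_nonneg: "\<And>j t. 0 \<le> f j t"
    and bound: "\<And>n. (\<Sum>j<n. N (f j)) \<le> K"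
    and x: "x \<in> borel_measurable mu01"
    and majorant: "\<And>t. t \<in> {0..1} \<Longrightarrow> \<exists>n. \<bar>x t\<bar> \<le> (\<Sum>j<n. f j t)"
  shows "x \<in> E \<and> N x \<le> K"
proof -
  define S where "S n = (\<lambda>t. \<Sum>j<n. f j t)" for n
  obtain y where y: "y \<in> E" and lim: "(\<lambda>n. N (\<lambda>t. S n t - y t)) \<longlonglongrightarrow> 0"
    using summable_norms_converge[OF f bound] unfolding S_def by blast
  have S: "S n \<in> E" and NS: "N (S n) \<le> K" for n
    unfolding S_def using sum_mem_norm_le[of "{..<n}" f] f bound[of n] by auto
  have S_mono: "S m t \<le> S n t" if "m \<le> n" for m n t
    unfolding S_def using that f_nonneg by (intro sum_mono2) auto
  have "AE t in mu01. \<forall>n. S n t \<le> y t" by (rule AE_incseq_le_limit[OF S y S_mono lim])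
  then have "AE t in mu01. \<bar>x t\<bar> \<le> \<bar>y t\<bar>"
    using AE_space
  proof eventually_elim
    case (elim t)
    then obtain n where "\<bar>x t\<bar> \<le> S n t" using majorant unfolding S_def by auto
    with elim show ?case by (smt (verit))
  qed
  then show ?thesis using ideal[OF y x] norm_le_of_tendsto[OF S y NS lim] by force
qed

lemma mem_closed_span:
  assumes "xs n \<in> E" shows "xs n \<in> closed_span E N xs"
proof -
  have "xs n = (\<lambda>t. \<Sum>i<Suc n. (if i = n then 1 else 0) * xs i t)"
    by (simp add: if_distrib)
  then have "xs n \<in> lin_combs xs" unfolding lin_combs_def by (intro CollectI exI conjI TrueI)
  then show ?thesis using assms norm_zero unfolding closed_span_def by force
qed

end

locale sym_space_fund = sym_space +
  fixes \<phi> :: "real \<Rightarrow> real"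
  assumes fundamental: "has_fundamental_function E N \<phi>"
begin

lemma indicator_mem_norm:
  assumes A: "A \<in> sets mu01" and pos: "0 < measure mu01 A"
  shows "indicator A \<in> E \<and> N (indicator A) = \<phi> (measure mu01 A)"
proof -
  define a where "a = measure mu01 A"
  have a: "a \<in> {0<..1}" using pos measure_mu01_le_1[of A] unfolding a_def by auto
  then have interval: "indicator {0<..<a} \<in> E" "N (indicator {0<..<a}) = \<phi> a"
    using fundamental unfolding has_fundamental_function_def by auto
  have A_sub: "A \<subseteq> {0..1}" using sets.sets_into_space[OF A] by simp
  have measure_interval: "measure mu01 {0<..<a} = a"
    using a by (subst measure_restrict_space) auto
  have "measure mu01 {t\<in>{0..1}. \<bar>indicator A t\<bar> > \<tau>} =
        measure mu01 {t\<in>{0..1}. \<bar>indicator {0<..<a} t :: real\<bar> > \<tau>}" if "\<tau> > 0" for \<tau>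
  proof (cases "\<tau> < 1")
    case True
    then have "{t\<in>{0..1}. \<bar>indicator A t :: real\<bar> > \<tau>} = A"
      and "{t\<in>{0..1}. \<bar>indicator {0<..<a} t :: real\<bar> > \<tau>} = {0<..<a}"
      using \<open>\<tau> > 0\<close> A_sub a by (auto simp: indicator_def)
    then show ?thesis using measure_interval a_def by simp
  next
    case False
    then have "{t\<in>{0..1}. \<bar>indicator A t :: real\<bar> > \<tau>} = {}"
      and "{t\<in>{0..1}. \<bar>indicator {0<..<a} t :: real\<bar> > \<tau>} = {}"
      by (auto simp: indicator_def)
    then show ?thesis by (simp only:)
  qed
  then show ?thesis
    using rearrangement_invariant[OF interval(1) borel_measurable_indicator[OF A]] interval(2)
    unfolding a_def by simp
qed

lemma scaled_indicator_null:
  assumes A: "A \<in> sets mu01" and null: "measure mu01 A = 0"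
  shows "(\<lambda>t. c * indicator A t) \<in> E \<and> N (\<lambda>t. c * indicator A t) = 0"
proof (rule null_mem)
  show "(\<lambda>t. c * indicator A t) \<in> borel_measurable mu01" using A by measurable
  have "AE t in mu01. t \<notin> A"
    using A null by (intro AE_not_in)
      (simp add: null_sets_def finite_measure.emeasure_eq_measure[OF finite_measure_mu01])
  then show "AE t in mu01. c * indicator A t = 0" by eventually_elim simp
qed

lemma scaled_indicator:
  assumes "A \<in> sets mu01" and "0 < measure mu01 A"
  shows "(\<lambda>t. c * indicator A t) \<in> E \<and> N (\<lambda>t. c * indicator A t) = \<bar>c\<bar> * \<phi> (measure mu01 A)"
  using indicator_mem_norm[OF assms] scale_mem norm_scale by simp

lemma scaled_fundamental_le_norm:
  assumes y: "y \<in> E" and A: "A \<in> sets mu01" "0 < measure mu01 A"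
    and c: "0 \<le> c" and le: "\<And>t. t \<in> A \<Longrightarrow> c \<le> \<bar>y t\<bar>"
  shows "c * \<phi> (measure mu01 A) \<le> N y"
proof -
  have "AE t in mu01. \<bar>c * indicator A t\<bar> \<le> \<bar>y t\<bar>"
    using le c by (intro AE_I2) (auto simp: indicator_def)
  then have "N (\<lambda>t. c * indicator A t) \<le> N y"
    using ideal[OF y] A(1) by (simp add: borel_measurable_indicator)
  then show ?thesis using scaled_indicator[OF A] c by simp
qed

end

section \<open>The class G and dilation indices\<close>

lemma classG_pos: "f \<in> classG \<Longrightarrow> 0 < t \<Longrightarrow> t \<le> 1 \<Longrightarrow> 0 < f t"
  unfolding classG_def by auto

lemma classG_mono: "f \<in> classG \<Longrightarrow> 0 < s \<Longrightarrow> s \<le> t \<Longrightarrow> t \<le> 1 \<Longrightarrow> f s \<le> f t"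
  unfolding classG_def by (auto intro: mono_onD)

lemma classG_div_antimono:
  assumes f: "f \<in> classG" and s: "0 < s" "s \<le> t" and t: "t \<le> 1"
  shows "s * f t \<le> t * f s"
proof -
  have concave: "concave_on {0<..1} f" using f unfolding classG_def by blast
  \<comment> \<open>concavity is only available on \<open>(0,1]\<close>: use the chord from \<open>e > 0\<close> to \<open>t\<close>, let \<open>e \<rightarrow> 0\<close>\<close>
  have "(s - e) / (t - e) * f t \<le> f s" if e: "e \<in> {0<..<s}" for e
  proof -
    define l where "l = (s - e) / (t - e)"
    have l: "0 \<le> l" "l \<le> 1" using e s unfolding l_def by auto
    have "l * (t - e) = s - e" using e s unfolding l_def by simp
    then have "(1 - l) *\<^sub>R e + l *\<^sub>R t = s" by (simp add: algebra_simps)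
    then have "(1 - l) * f e + l * f t \<le> f s"
      using concave_onD[OF concave l] e s t by auto
    moreover have "0 \<le> (1 - l) * f e" using l e s t classG_pos[OF f, of e] by simp
    ultimately show ?thesis unfolding l_def by linarith
  qed
  then have "eventually (\<lambda>e. (s - e) / (t - e) * f t \<le> f s) (at_right 0)"
    using s by (intro eventually_at_rightI) auto
  moreover have "((\<lambda>e. (s - e) / (t - e) * f t) \<longlongrightarrow> (s - 0) / (t - 0) * f t) (at_right 0)"
    using s by (intro tendsto_intros) auto
  ultimately have "s / t * f t \<le> f s" using tendsto_upperbound by fastforce
  then show ?thesis using s by (simp add: field_simps)
qed

lemma power_decomposition:
  fixes t0 t :: real
  assumes t0: "0 < t0" "t0 < 1" and t: "0 < t" "t \<le> 1"
  obtains n r where "t = t0 ^ n * r" and "t0 < r" and "r \<le> 1"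
proof
  define n where "n = nat \<lfloor>ln t / ln t0\<rfloor>"
  have ln_t0: "ln t0 < 0" using t0 by simp
  have "0 \<le> ln t / ln t0" using t ln_t0 by (simp add: divide_nonpos_neg)
  then have n: "real n \<le> ln t / ln t0" "ln t / ln t0 < real n + 1"
    unfolding n_def by linarith+
  have ln_r: "ln (t / t0 ^ n) = ln t - real n * ln t0"
    using t t0 by (simp add: ln_div ln_realpow)
  show "t = t0 ^ n * (t / t0 ^ n)" using t0 by simp
  have "ln t \<le> real n * ln t0" using n(1) ln_t0 by (simp add: neg_le_divide_eq)
  then have "ln (t / t0 ^ n) \<le> 0" using ln_r by linarith
  then show "t / t0 ^ n \<le> 1" using t t0 by simp
  have "real n * ln t0 + ln t0 < ln t" using n(2) ln_t0 by (simp add: neg_divide_less_eq distrib_right)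
  then have "ln t0 < ln (t / t0 ^ n)" using ln_r by linarith
  then show "t0 < t / t0 ^ n" using t t0 by simp
qed

\<comment> \<open>Equivalently \<open>\<bar>ln h s - ln h t\<bar> \<le> \<bar>ln s - ln t\<bar>\<close> on \<open>(0,1]\<close>.\<close>
locale log_lipschitz =
  fixes h :: "real \<Rightarrow> real"
  assumes pos: "\<And>t. 0 < t \<Longrightarrow> t \<le> 1 \<Longrightarrow> 0 < h t"
    and div_self_antimono: "\<And>s t. 0 < s \<Longrightarrow> s \<le> t \<Longrightarrow> t \<le> 1 \<Longrightarrow> s * h t \<le> t * h s"
    and mult_self_mono: "\<And>s t. 0 < s \<Longrightarrow> s \<le> t \<Longrightarrow> t \<le> 1 \<Longrightarrow> s * h s \<le> t * h t"
begin

lemma quotient_bounds: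
  assumes s: "0 < s" "s \<le> 1" and t: "0 < t" "t \<le> 1"
  shows "t \<le> h (s * t) / h s" and "h (s * t) / h s \<le> 1 / t"
proof -
  have st: "0 < s * t" "s * t \<le> s" using s t by (auto simp: mult_left_le)
  have "s * t * h s \<le> s * h (s * t)" and "s * t * h (s * t) \<le> s * h s"
    using div_self_antimono[OF st s(2)] mult_self_mono[OF st s(2)] by auto
  then show "t \<le> h (s * t) / h s" and "h (s * t) / h s \<le> 1 / t"
    using pos[OF s] s t by (auto simp: field_simps)
qed

lemma dilation_set_eq:
  "0 < t \<Longrightarrow> t \<le> 1 \<Longrightarrow>
    {h (s * t) / h s | s. 0 < s \<and> s \<le> min 1 (1 / t)} = {h (s * t) / h s | s. 0 < s \<and> s \<le> 1}"
  by (simp add: min_def)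

lemma le_dilation:
  assumes s: "0 < s" "s \<le> 1" and t: "0 < t" "t \<le> 1"
  shows "h (s * t) / h s \<le> dilation_function h t"
proof -
  have "bdd_above {h (s * t) / h s | s. 0 < s \<and> s \<le> 1}"
    using quotient_bounds(2) t by (auto intro!: bdd_aboveI[where M = "1 / t"])
  then show ?thesis unfolding dilation_function_def dilation_set_eq[OF t] using s
    by (intro cSup_upper) auto
qed

lemma dilation_le:
  assumes t: "0 < t" "t \<le> 1" and B: "\<And>s. 0 < s \<Longrightarrow> s \<le> 1 \<Longrightarrow> h (s * t) / h s \<le> B"
  shows "dilation_function h t \<le> B"
  unfolding dilation_function_def dilation_set_eq[OF t]
  by (rule cSup_least) (use B in \<open>auto intro: exI[of _ 1]\<close>)

lemma dilation_bounds:
  assumes "0 < t" "t \<le> 1"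
  shows "t \<le> dilation_function h t" and "dilation_function h t \<le> 1 / t"
  using le_dilation[of 1 t] quotient_bounds[of 1 t] dilation_le[OF assms] quotient_bounds(2) assms
  by (fastforce+)

lemma dilation_submult:
  assumes x: "0 < x" "x \<le> 1" and y: "0 < y" "y \<le> 1"
  shows "dilation_function h (x * y) \<le> dilation_function h x * dilation_function h y"
proof (rule dilation_le)
  show "0 < x * y" "x * y \<le> 1" using x y by (auto simp: mult_le_one)
  fix s :: real assume s: "0 < s" "s \<le> 1"
  have sx: "0 < s * x" "s * x \<le> 1" using s x by (auto simp: mult_le_one)
  have "h (s * (x * y)) / h s = (h (s * x * y) / h (s * x)) * (h (s * x) / h s)"
    using pos[OF sx] by (simp add: mult.assoc)
  also have "\<dots> \<le> dilation_function h y * dilation_function h x"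
    using le_dilation[OF sx y] le_dilation[OF s x] quotient_bounds(1)[OF sx y] quotient_bounds(1)[OF s x] x y
    by (intro mult_mono') auto
  finally show "h (s * (x * y)) / h s \<le> dilation_function h x * dilation_function h y"
    by (simp add: mult.commute)
qed

lemma dilation_power_mult:
  assumes t0: "0 < t0" "t0 \<le> 1" and r: "0 < r" "r \<le> 1"
  shows "dilation_function h (t0 ^ n * r) \<le> dilation_function h t0 ^ n * dilation_function h r"
proof (induction n)
  case 0
  then show ?case by simp
next
  case (Suc n)
  have tr: "0 < t0 ^ n * r" "t0 ^ n * r \<le> 1" using t0 r by (auto simp: mult_le_one power_le_one)
  have "dilation_function h (t0 ^ Suc n * r) \<le> dilation_function h t0 * dilation_function h (t0 ^ n * r)"
    using dilation_submult[OF t0 tr] by (simp add: mult.assoc)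
  also have "\<dots> \<le> dilation_function h t0 * (dilation_function h t0 ^ n * dilation_function h r)"
    using Suc.IH dilation_bounds(1)[OF t0] t0 by (intro mult_left_mono) auto
  finally show ?case by (simp add: mult.assoc)
qed

lemma ln_dilation_le: "0 < t \<Longrightarrow> t \<le> 1 \<Longrightarrow> ln (dilation_function h t) \<le> - ln t"
  using ln_mono[OF dilation_bounds(2)] dilation_bounds(1)[of t] by (simp add: ln_div)

lemma index_le_1: "0 < t \<Longrightarrow> t < 1 \<Longrightarrow> ln (dilation_function h t) / ln t \<le> 1"
  using dilation_bounds(1)[of t] by (simp add: neg_divide_le_eq)

\<comment> \<open>Fekete's argument: \<open>ln \<circ> dilation_function h \<circ> exp\<close> is subadditive on \<open>(-\<infinity>, 0]\<close>.\<close>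
lemma index_lower_bound:
  assumes t0: "0 < t0" "t0 < 1" and t: "0 < t" "t < 1"
  defines "G0 \<equiv> ln (dilation_function h t0) / ln t0"
  shows "G0 - (G0 + 1) * ln t0 / ln t \<le> ln (dilation_function h t) / ln t"
proof -
  obtain n r where t_eq: "t = t0 ^ n * r" and r: "t0 < r" "r \<le> 1"
    using power_decomposition[OF t0] t by (metis less_imp_le)
  have "0 < r" using r t0 by simp
  have G0: "ln (dilation_function h t0) = G0 * ln t0" and "-1 \<le> G0"
    using ln_dilation_le[of t0] t0 by (auto simp: G0_def neg_le_divide_eq)
  have "0 < dilation_function h t" using dilation_bounds(1)[of t] t by simp
  then have "ln (dilation_function h t) \<le> ln (dilation_function h t0 ^ n * dilation_function h r)"
    using dilation_power_mult[of t0 r n] t0 r \<open>0 < r\<close> unfolding t_eq by (intro ln_mono) auto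
  also have "\<dots> = n * ln (dilation_function h t0) + ln (dilation_function h r)"
    using dilation_bounds(1)[of t0] dilation_bounds(1)[of r] t0 r by (simp add: ln_mult ln_realpow)
  also have "\<dots> \<le> G0 * (n * ln t0) - ln r"
    using ln_dilation_le[OF \<open>0 < r\<close> r(2)] G0 by simp
  also have "n * ln t0 = ln t - ln r" using t_eq t0 \<open>0 < r\<close> by (simp add: ln_mult ln_realpow)
  also have "G0 * (ln t - ln r) - ln r \<le> G0 * ln t - (G0 + 1) * ln t0"
    using mult_left_mono[of "ln t0" "ln r" "G0 + 1"] \<open>-1 \<le> G0\<close> r t0 by (simp add: algebra_simps)
  finally have "ln (dilation_function h t) \<le> G0 * ln t - (G0 + 1) * ln t0" .
  moreover have "ln t < 0" using t by simp
  ultimately show ?thesis by (simp add: neg_le_divide_eq left_diff_distrib)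
qed

lemma index_tendsto:
  "((\<lambda>t. ln (dilation_function h t) / ln t) \<longlongrightarrow>
     (SUP t\<in>{0<..<1}. ln (dilation_function h t) / ln t)) (at_right 0)"
  (is "(?G \<longlongrightarrow> ?S) _")
proof -
  have bdd: "bdd_above (?G ` {0<..<1})" using index_le_1 by (auto intro!: bdd_aboveI[where M = 1])
  have near_0: "eventually (\<lambda>t. 0 < t \<and> t < 1) (at_right (0::real))"
    by (intro eventually_at_rightI[of 0 1]) auto
  show ?thesis
  proof (rule order_tendstoI)
    fix b assume "?S < b"
    from near_0 show "eventually (\<lambda>t. ?G t < b) (at_right 0)"
      by eventually_elim (use \<open>?S < b\<close> cSUP_upper[OF _ bdd] in fastforce)
  next
    fix a assume "a < ?S"
    then obtain t0 where t0: "0 < t0" "t0 < 1" and "a < ?G t0"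
      using less_cSUP_iff[OF _ bdd] by auto
    have "((\<lambda>t. (?G t0 + 1) * ln t0 / ln t) \<longlongrightarrow> 0) (at_right 0)"
      by (intro tendsto_divide_0[OF tendsto_const] filterlim_mono[OF ln_at_0 at_bot_le_at_infinity])
        simp
    then have "((\<lambda>t. ?G t0 - (?G t0 + 1) * ln t0 / ln t) \<longlongrightarrow> ?G t0) (at_right 0)"
      using tendsto_diff[OF tendsto_const] by fastforce
    then have "eventually (\<lambda>t. a < ?G t0 - (?G t0 + 1) * ln t0 / ln t) (at_right 0)"
      using \<open>a < ?G t0\<close> by (rule order_tendstoD)
    with near_0 show "eventually (\<lambda>t. a < ?G t) (at_right 0)"
      by eventually_elim (use index_lower_bound[OF t0] in fastforce)
  qed
qed

lemma lower_dilation_index_eq: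
  "lower_dilation_index h = (SUP t\<in>{0<..<1}. ln (dilation_function h t) / ln t)"
  unfolding lower_dilation_index_def by (rule tendsto_Lim[OF trivial_limit_at_right_real index_tendsto])

lemma dilation_le_power:
  assumes "lower_dilation_index h > 0"
  obtains C \<delta> where "0 < \<delta>" and "\<And>t. 0 < t \<Longrightarrow> t \<le> 1 \<Longrightarrow> dilation_function h t \<le> C * t powr \<delta>"
proof -
  define \<delta> where "\<delta> = lower_dilation_index h / 2"
  have "0 < \<delta>" using assms unfolding \<delta>_def by simp
  then have "eventually (\<lambda>t. \<delta> < ln (dilation_function h t) / ln t) (at_right 0)"
    using index_tendsto unfolding lower_dilation_index_eq[symmetric] \<delta>_def
    by (intro order_tendstoD(1)) auto
  then obtain b0 where "0 < b0"
    and near_0: "\<And>t. 0 < t \<Longrightarrow> t < b0 \<Longrightarrow> \<delta> < ln (dilation_function h t) / ln t"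
    unfolding eventually_at_right_field by auto
  define b where "b = min b0 1"
  have b: "0 < b" "b \<le> 1" using \<open>0 < b0\<close> unfolding b_def by auto
  define C where "C = 1 / b powr (1 + \<delta>)"
  have "b powr (1 + \<delta>) \<le> 1" using b \<open>0 < \<delta>\<close> by (intro powr_le1) auto
  then have "1 \<le> C" using b unfolding C_def by simp
  have "dilation_function h t \<le> C * t powr \<delta>" if t: "0 < t" "t \<le> 1" for t
  proof (cases "t < b")
    case True
    then have "ln (dilation_function h t) < \<delta> * ln t"
      using near_0[OF t(1)] t unfolding b_def by (simp add: neg_less_divide_eq mult.commute)
    then have "exp (ln (dilation_function h t)) < exp (\<delta> * ln t)" by simp
    then have "dilation_function h t < t powr \<delta>"
      using dilation_bounds(1)[OF t] t by (simp add: powr_def mult.commute)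
    then show ?thesis using mult_right_mono[OF \<open>1 \<le> C\<close>, of "t powr \<delta>"] by simp
  next
    case False
    have "dilation_function h t \<le> 1 / b" using dilation_bounds(2)[OF t] False t
      by (meson b(1) divide_left_mono not_less order_trans zero_le_one mult_pos_pos)
    also have "\<dots> = C * b powr \<delta>" using b unfolding C_def by (simp add: powr_add)
    also have "\<dots> \<le> C * t powr \<delta>"
      using False b \<open>0 < \<delta>\<close> unfolding C_def by (intro mult_left_mono powr_mono2) auto
    finally show ?thesis .
  qed
  with \<open>0 < \<delta>\<close> show ?thesis using that by blast
qed

lemma le_power_of_index_pos:
  assumes "lower_dilation_index h > 0"
  obtains C \<delta> where "0 < \<delta>" and "\<And>t. 0 < t \<Longrightarrow> t \<le> 1 \<Longrightarrow> h t \<le> C * t powr \<delta>"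
proof -
  obtain C \<delta> where "0 < \<delta>" and M: "\<And>t. 0 < t \<Longrightarrow> t \<le> 1 \<Longrightarrow> dilation_function h t \<le> C * t powr \<delta>"
    using dilation_le_power[OF assms] by blast
  have "h t \<le> (h 1 * C) * t powr \<delta>" if t: "0 < t" "t \<le> 1" for t
  proof -
    have "h t / h 1 \<le> C * t powr \<delta>" using le_dilation[of 1 t] M[OF t] t by simp
    then show ?thesis using pos[of 1] by (simp add: divide_le_eq mult_ac)
  qed
  with \<open>0 < \<delta>\<close> show ?thesis using that by blast
qed

end

lemma log_lipschitz_ratio:
  assumes \<phi>: "\<phi> \<in> classG" and \<psi>: "\<psi> \<in> classG"
  shows "log_lipschitz (\<lambda>t. \<psi> t / \<phi> t)"
proof
  fix s t :: real assume s: "0 < s" "s \<le> t" and t: "t \<le> 1"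
  have pos: "0 < \<phi> s" "0 < \<phi> t" "0 < \<psi> s" "0 < \<psi> t"
    using s t classG_pos[OF \<phi>] classG_pos[OF \<psi>] by auto
  have "(s * \<psi> t) * \<phi> s \<le> (t * \<psi> s) * \<phi> t"
    by (rule mult_mono[OF classG_div_antimono[OF \<psi> s t] classG_mono[OF \<phi> s t]]) (use pos s in auto)
  then show "s * (\<psi> t / \<phi> t) \<le> t * (\<psi> s / \<phi> s)" using pos by (simp add: field_simps)
  have "(s * \<phi> t) * \<psi> s \<le> (t * \<phi> s) * \<psi> t"
    by (rule mult_mono[OF classG_div_antimono[OF \<phi> s t] classG_mono[OF \<psi> s t]]) (use pos s in auto)
  then show "s * (\<psi> s / \<phi> s) \<le> t * (\<psi> t / \<phi> t)" using pos by (simp add: field_simps mult_ac)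
qed (use assms classG_pos in auto)

section \<open>The inclusion of E into F\<close>

lemma (in sym_space_fund) level_set_measure_le:
  assumes \<phi>: "\<phi> \<in> classG" and y: "y \<in> E" and m: "0 < m" "m \<le> 1"
    and A: "A \<in> sets mu01" "measure mu01 A \<le> m" and c: "0 \<le> c" and le: "\<And>t. t \<in> A \<Longrightarrow> c \<le> \<bar>y t\<bar>"
  shows "c * \<phi> m * measure mu01 A \<le> m * N y"
proof (cases "measure mu01 A = 0")
  case True
  then show ?thesis using norm_nonneg[OF y] m by simp
next
  case False
  then have pos: "0 < measure mu01 A" by (simp add: less_le)
  have "c * \<phi> m * measure mu01 A \<le> c * (m * \<phi> (measure mu01 A))"
    using classG_div_antimono[OF \<phi> pos A(2) m(2)] c by (simp add: mult_left_mono mult_ac)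
  also have "\<dots> \<le> m * N y"
    using scaled_fundamental_le_norm[OF y A(1) pos c le] m by (simp add: mult_left_mono mult_ac)
  finally show ?thesis .
qed

lemma le_dyadic_sum:
  fixes x c :: real
  assumes "0 \<le> c" and "\<bar>x\<bar> \<le> c * 2 ^ n"
  shows "\<bar>x\<bar> \<le> c + (\<Sum>i<n. if c * 2 ^ i < \<bar>x\<bar> then c * 2 ^ Suc i else 0)"
  using assms(2)
proof (induction n)
  case 0
  then show ?case by simp
next
  case (Suc n)
  have nonneg: "0 \<le> (\<Sum>i<n. if c * 2 ^ i < \<bar>x\<bar> then c * 2 ^ Suc i else 0)"
    using assms(1) by (intro sum_nonneg) auto
  show ?case
  proof (cases "\<bar>x\<bar> \<le> c * 2 ^ n")
    case True
    then show ?thesis using Suc.IH assms(1) by simp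
  next
    case False
    then show ?thesis using Suc.prems nonneg assms(1) by simp
  qed
qed

lemma dyadic_majorant:
  fixes x c :: real
  assumes "0 < c"
  obtains n where "\<bar>x\<bar> \<le> c + (\<Sum>i<n. if c * 2 ^ i < \<bar>x\<bar> then c * 2 ^ Suc i else 0)"
proof -
  obtain n where "\<bar>x\<bar> / c < 2 ^ n" using real_arch_pow[of 2 "\<bar>x\<bar> / c"] by auto
  then have "\<bar>x\<bar> \<le> c * 2 ^ n" using assms by (simp add: divide_less_eq mult.commute)
  then show ?thesis using le_dyadic_sum[of c x n] assms that by simp
qed

lemma sum_le_geometric_bound:
  fixes a :: "nat \<Rightarrow> real"
  assumes "a 0 \<le> B" and "\<And>i. a (Suc i) \<le> 2 * B * q ^ i" and "0 \<le> B" and "0 \<le> q" "q < 1"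
  shows "(\<Sum>j<n. a j) \<le> B * (1 + 2 / (1 - q))"
proof (cases n)
  case (Suc k)
  have "(\<Sum>j<n. a j) = a 0 + (\<Sum>i<k. a (Suc i))"
    unfolding Suc by (rule sum.lessThan_Suc_shift)
  also have "\<dots> \<le> B + 2 * B * (\<Sum>i<k. q ^ i)"
    using assms(1,2) by (simp add: sum_distrib_left add_mono sum_mono)
  also have "\<dots> \<le> B + 2 * B * (1 / (1 - q))"
    using assms(3-) by (intro add_left_mono mult_left_mono) (auto simp: sum_gp_strict divide_right_mono)
  finally show ?thesis by (simp add: algebra_simps)
qed (use assms in simp)

lemma exists_small_powr:
  fixes K e \<delta> :: real
  assumes "0 < K" and "0 < e" and "0 < \<delta>"
  obtains m where "0 < m" and "m \<le> 1" and "K * m powr \<delta> \<le> e"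
proof
  define m where "m = min 1 ((e / K) powr (1 / \<delta>))"
  show m: "0 < m" "m \<le> 1" unfolding m_def using assms by auto
  have "m powr \<delta> \<le> ((e / K) powr (1 / \<delta>)) powr \<delta>"
    using m assms by (intro powr_mono2) (auto simp: m_def)
  also have "\<dots> = e / K" using assms by (simp add: powr_powr)
  finally show "K * m powr \<delta> \<le> e" using assms by (simp add: field_simps)
qed

locale symmetric_embedding =
  E: sym_space_fund E NE \<phi> + F: sym_space_fund F NF \<psi>
  for E NE \<phi> F NF \<psi> +
  fixes C \<delta> :: real
  assumes \<phi>_classG: "\<phi> \<in> classG" and \<psi>_classG: "\<psi> \<in> classG" and \<delta>_pos: "0 < \<delta>"
    and fundamental_le_power: "\<And>a. 0 < a \<Longrightarrow> a \<le> 1 \<Longrightarrow> \<psi> a \<le> C * a powr \<delta> * \<phi> a"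
begin

lemma C_pos: "0 < C"
proof -
  have "0 < \<psi> 1" "0 < \<phi> 1" using classG_pos[OF \<psi>_classG] classG_pos[OF \<phi>_classG] by auto
  moreover have "\<psi> 1 \<le> C * \<phi> 1" using fundamental_le_power[of 1] by simp
  ultimately show ?thesis by (smt (verit) mult_nonpos_nonneg)
qed

lemma scaled_level_set_bound:
  assumes y: "y \<in> E" and A: "A \<in> sets mu01" and c: "0 \<le> c" and le: "\<And>t. t \<in> A \<Longrightarrow> c \<le> \<bar>y t\<bar>"
  shows "(\<lambda>t. c * indicator A t) \<in> F \<and> NF (\<lambda>t. c * indicator A t) \<le> C * measure mu01 A powr \<delta> * NE y"
proof (cases "measure mu01 A = 0")
  case True
  then show ?thesis using F.scaled_indicator_null[OF A] E.norm_nonneg[OF y] C_pos by simp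
next
  case False
  then have pos: "0 < measure mu01 A" by (simp add: less_le)
  have "NF (\<lambda>t. c * indicator A t) = c * \<psi> (measure mu01 A)"
    using F.scaled_indicator[OF A(1) pos] c by simp
  also have "\<dots> \<le> c * (C * measure mu01 A powr \<delta> * \<phi> (measure mu01 A))"
    using fundamental_le_power[OF pos measure_mu01_le_1] c by (rule mult_left_mono)
  also have "\<dots> = C * measure mu01 A powr \<delta> * (c * \<phi> (measure mu01 A))" by simp
  also have "\<dots> \<le> C * measure mu01 A powr \<delta> * NE y"
    using E.scaled_fundamental_le_norm[OF y A(1) pos c le] C_pos by (intro mult_left_mono) auto
  finally show ?thesis using F.scaled_indicator[OF A(1) pos] by simp
qed

lemma dyadic_level_set_measure_le:
  assumes y: "y \<in> E" "0 < NE y" and m: "0 < m" "m \<le> 1"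
    and supp: "measure mu01 {t\<in>{0..1}. y t \<noteq> 0} \<le> m"
  shows "measure mu01 {t\<in>{0..1}. NE y / \<phi> m * 2 ^ i < \<bar>y t\<bar>} \<le> m / 2 ^ i"
proof -
  define c where "c = NE y / \<phi> m * 2 ^ i"
  define A where "A = {t\<in>{0..1}. c < \<bar>y t\<bar>}"
  have "0 < \<phi> m" using classG_pos[OF \<phi>_classG m] .
  then have c: "0 < c" using y(2) unfolding c_def by simp
  have A_sets: "A \<in> sets mu01"
    unfolding A_def by (rule sets_mu01_Collect[of "\<lambda>v. c < \<bar>v\<bar>", OF _ E.mem_measurable[OF y(1)]]) simp
  have S_sets: "{t\<in>{0..1}. y t \<noteq> 0} \<in> sets mu01"
    by (rule sets_mu01_Collect[of "\<lambda>v. v \<noteq> 0", OF _ E.mem_measurable[OF y(1)]]) simp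
  have "A \<subseteq> {t\<in>{0..1}. y t \<noteq> 0}" using c unfolding A_def by auto
  then have "measure mu01 A \<le> measure mu01 {t\<in>{0..1}. y t \<noteq> 0}"
    by (rule finite_measure.finite_measure_mono[OF finite_measure_mu01 _ S_sets])
  then have "c * \<phi> m * measure mu01 A \<le> m * NE y"
    using c supp by (intro E.level_set_measure_le[OF \<phi>_classG y(1) m A_sets]) (auto simp: A_def)
  also have "c * \<phi> m = 2 ^ i * NE y" unfolding c_def using \<open>0 < \<phi> m\<close> by simp
  finally have "(2 ^ i * measure mu01 A) * NE y \<le> m * NE y" by (simp only: mult_ac)
  then have "2 ^ i * measure mu01 A \<le> m" using mult_le_cancel_right_pos[OF y(2)] by blast
  then show ?thesis unfolding A_def c_def by (simp add: le_divide_eq mult.commute)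
qed

lemma support_piece_bound:
  assumes y: "y \<in> E" and m: "0 < m" "m \<le> 1"
    and supp: "measure mu01 {t\<in>{0..1}. y t \<noteq> 0} \<le> m"
  defines "S \<equiv> {t\<in>{0..1}. y t \<noteq> 0}"
  shows "(\<lambda>t. NE y / \<phi> m * indicator S t) \<in> F \<and>
    NF (\<lambda>t. NE y / \<phi> m * indicator S t) \<le> C * m powr \<delta> * NE y"
proof -
  define c where "c = NE y / \<phi> m"
  have "0 < \<phi> m" using classG_pos[OF \<phi>_classG m] .
  then have c: "0 \<le> c" using E.norm_nonneg[OF y] unfolding c_def by simp
  have S_sets: "S \<in> sets mu01"
    unfolding S_def by (rule sets_mu01_Collect[of "\<lambda>v. v \<noteq> 0", OF _ E.mem_measurable[OF y]]) simp
  have "(\<lambda>t. c * indicator S t) \<in> F \<and> NF (\<lambda>t. c * indicator S t) \<le> C * m powr \<delta> * NE y"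
  proof (cases "measure mu01 S = 0")
    case True
    then show ?thesis using F.scaled_indicator_null[OF S_sets True, of c] C_pos E.norm_nonneg[OF y] by simp
  next
    case False
    then have pos: "0 < measure mu01 S" by (simp add: less_le)
    have "NF (\<lambda>t. c * indicator S t) = c * \<psi> (measure mu01 S)"
      using F.scaled_indicator[OF S_sets pos, of c] c by simp
    also have "\<dots> \<le> c * \<psi> m"
      using classG_mono[OF \<psi>_classG pos supp[folded S_def] m(2)] c by (rule mult_left_mono)
    also have "\<dots> \<le> c * (C * m powr \<delta> * \<phi> m)"
      using fundamental_le_power[OF m] c by (rule mult_left_mono)
    also have "\<dots> = C * m powr \<delta> * NE y" using \<open>0 < \<phi> m\<close> unfolding c_def by simp
    finally show ?thesis using F.scaled_indicator[OF S_sets pos, of c] by simp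
  qed
  then show ?thesis unfolding c_def .
qed

lemma dyadic_piece_bound:
  fixes i :: nat
  assumes y: "y \<in> E" "0 < NE y" and m: "0 < m" "m \<le> 1"
    and supp: "measure mu01 {t\<in>{0..1}. y t \<noteq> 0} \<le> m"
  defines "c \<equiv> NE y / \<phi> m * 2 ^ i"
  defines "A \<equiv> {t\<in>{0..1}. c < \<bar>y t\<bar>}"
  shows "(\<lambda>t. c * indicator A t) \<in> F \<and>
    NF (\<lambda>t. c * indicator A t) \<le> C * m powr \<delta> * (1 / 2 powr \<delta>) ^ i * NE y"
proof -
  have "0 < \<phi> m" using classG_pos[OF \<phi>_classG m] .
  then have "0 \<le> c" using y(2) unfolding c_def by simp
  have A_sets: "A \<in> sets mu01"
    unfolding A_def by (rule sets_mu01_Collect[of "\<lambda>v. c < \<bar>v\<bar>", OF _ E.mem_measurable[OF y(1)]]) simp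
  have piece: "(\<lambda>t. c * indicator A t) \<in> F \<and>
      NF (\<lambda>t. c * indicator A t) \<le> C * measure mu01 A powr \<delta> * NE y"
    using \<open>0 \<le> c\<close> by (intro scaled_level_set_bound[OF y(1) A_sets]) (auto simp: A_def)
  have "measure mu01 A powr \<delta> \<le> (m / 2 ^ i) powr \<delta>"
    using dyadic_level_set_measure_le[OF y m supp, of i] \<delta>_pos
    by (intro powr_mono2) (auto simp: A_def c_def)
  also have "\<dots> = m powr \<delta> * (1 / 2 powr \<delta>) ^ i"
    using powr_power[of 2 \<delta> i] powr_powr[of 2 "real i" \<delta>]
    by (simp add: powr_divide powr_realpow power_one_over mult.commute)
  finally have "C * measure mu01 A powr \<delta> * NE y \<le> C * (m powr \<delta> * (1 / 2 powr \<delta>) ^ i) * NE y"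
    using C_pos y(2) by (intro mult_left_mono mult_right_mono) auto
  then show ?thesis using piece by (simp add: mult_ac)
qed

lemma small_support_bound:
  assumes y: "y \<in> E" and m: "0 < m" "m \<le> 1"
    and supp: "measure mu01 {t\<in>{0..1}. y t \<noteq> 0} \<le> m"
  shows "y \<in> F \<and> NF y \<le> C * (1 + 2 / (1 - 1 / 2 powr \<delta>)) * m powr \<delta> * NE y"
proof (cases "NE y = 0")
  case True
  then have "AE t in mu01. y t = 0" using E.norm_eq_0_iff[OF y] by simp
  then show ?thesis using F.null_mem[OF E.mem_measurable[OF y]] True by simp
next
  case False
  then have y_pos: "0 < NE y" using E.norm_nonneg[OF y] by simp
  define c where "c = NE y / \<phi> m"
  define f where "f j = (case j of
      0 \<Rightarrow> (\<lambda>t. c * indicator {t\<in>{0..1}. y t \<noteq> 0} t)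
    | Suc i \<Rightarrow> (\<lambda>t. 2 * (c * 2 ^ i * indicator {t\<in>{0..1}. c * 2 ^ i < \<bar>y t\<bar>} t)))" for j
  have "0 < c" using classG_pos[OF \<phi>_classG m] y_pos by (simp add: c_def)
  have "1 < 2 powr \<delta>" using \<delta>_pos by simp
  note support_piece = support_piece_bound[OF y m supp, folded c_def]
  note dyadic_piece = dyadic_piece_bound[OF y y_pos m supp, folded c_def]
  have f_F: "f j \<in> F" for j
    using support_piece dyadic_piece F.scale_mem by (cases j) (simp_all add: f_def)
  have "NF (f (Suc i)) \<le> 2 * (C * m powr \<delta> * NE y) * (1 / 2 powr \<delta>) ^ i" for i
  proof -
    have "NF (f (Suc i)) = 2 * NF (\<lambda>t. c * 2 ^ i * indicator {t\<in>{0..1}. c * 2 ^ i < \<bar>y t\<bar>} t)"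
      unfolding f_def using F.norm_scale dyadic_piece[of i] by simp
    then show ?thesis using dyadic_piece[of i] by (simp add: mult_ac)
  qed
  then have bound: "(\<Sum>j<n. NF (f j)) \<le> C * m powr \<delta> * NE y * (1 + 2 / (1 - 1 / 2 powr \<delta>))" for n
    using support_piece C_pos y_pos \<open>1 < 2 powr \<delta>\<close> by (intro sum_le_geometric_bound) (simp_all add: f_def)
  have majorant: "\<exists>n. \<bar>y t\<bar> \<le> (\<Sum>j<n. f j t)" if t: "t \<in> {0..1}" for t
  proof (cases "y t = 0")
    case False
    obtain n where "\<bar>y t\<bar> \<le> c + (\<Sum>i<n. if c * 2 ^ i < \<bar>y t\<bar> then c * 2 ^ Suc i else 0)"
      using dyadic_majorant[OF \<open>0 < c\<close>] .
    also have "\<dots> = (\<Sum>j<Suc n. f j t)"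
      unfolding sum.lessThan_Suc_shift using t False
      by (auto simp: f_def indicator_def mult_ac intro!: sum.cong)
    finally show ?thesis by blast
  qed (auto intro: exI[of _ 0])
  have nonneg: "0 \<le> f j t" for j t using \<open>0 < c\<close> by (cases j) (auto simp: f_def)
  from F.majorant_series_bound[OF f_F nonneg bound E.mem_measurable[OF y] majorant]
  show ?thesis by (simp add: mult_ac)
qed

lemma inclusion_bound: "y \<in> E \<Longrightarrow> y \<in> F \<and> NF y \<le> C * (1 + 2 / (1 - 1 / 2 powr \<delta>)) * NE y"
  using small_support_bound[of y 1] measure_mu01_le_1 by simp

lemma bounded_inclusion: "bounded_inclusion E NE F NF"
  unfolding bounded_inclusion_def using inclusion_bound by blast

lemma inclusion_DSS: "inclusion_DSS E NE F NF"
  unfolding inclusion_DSS_def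
proof
  assume "\<exists>xs. (\<forall>n. xs n \<in> E) \<and> (\<forall>n. \<not> (AE t in mu01. xs n t = 0)) \<and>
      (\<forall>m n. m \<noteq> n \<longrightarrow> (AE t in mu01. xs m t * xs n t = 0)) \<and>
      (\<exists>c>0. \<forall>x\<in>closed_span E NE xs. c * NE x \<le> NF x)"
  then obtain xs c where xs: "\<And>n. xs n \<in> E" and nonzero: "\<And>n. \<not> (AE t in mu01. xs n t = 0)"
    and disjoint: "\<And>m n. m \<noteq> n \<Longrightarrow> AE t in mu01. xs m t * xs n t = 0"
    and "0 < c" and below: "\<And>x. x \<in> closed_span E NE xs \<Longrightarrow> c * NE x \<le> NF x"
    by blast
  define K where "K = C * (1 + 2 / (1 - 1 / 2 powr \<delta>))"
  have "1 < 2 powr \<delta>" using \<delta>_pos by simp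
  then have "0 < K" unfolding K_def using C_pos by (simp add: add_pos_pos)
  then obtain m where m: "0 < m" "m \<le> 1" and "K * m powr \<delta> \<le> c / 2"
    using exists_small_powr[of K "c / 2" \<delta>] \<open>0 < c\<close> \<delta>_pos by auto
  define X where "X n = {t\<in>{0..1}. xs n t \<noteq> 0}" for n
  have X_sets: "X n \<in> sets mu01" for n
    unfolding X_def by (rule sets_mu01_Collect[of "\<lambda>v. v \<noteq> 0", OF _ E.mem_measurable[OF xs]]) simp
  have X_disjoint: "AE t in mu01. t \<notin> X k \<or> t \<notin> X n" if "k \<noteq> n" for k n
    using disjoint[OF that] by eventually_elim (auto simp: X_def)
  obtain n where small: "measure mu01 (X n) < m"
    by (rule finite_measure.AE_disjoint_sequence_small[OF finite_measure_mu01 X_sets X_disjoint m(1)])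
  have "0 < NE (xs n)"
    using nonzero[of n] E.norm_eq_0_iff[OF xs] E.norm_nonneg[OF xs] by (simp add: less_le)
  have "c * NE (xs n) \<le> NF (xs n)" using below E.mem_closed_span[of xs n, OF xs] by blast
  also have "\<dots> \<le> K * m powr \<delta> * NE (xs n)"
    using small_support_bound[OF xs m less_imp_le[OF small[unfolded X_def]]] unfolding K_def by simp
  also have "\<dots> \<le> c / 2 * NE (xs n)"
    using \<open>K * m powr \<delta> \<le> c / 2\<close> \<open>0 < NE (xs n)\<close> by (intro mult_right_mono) auto
  finally show False using \<open>0 < c\<close> \<open>0 < NE (xs n)\<close> by simp
qed

end

theorem theorem5:
  fixes E F :: "(real \<Rightarrow> real) set" and NE NF :: "(real \<Rightarrow> real) \<Rightarrow> real"
    and \<phi> \<psi> :: "real \<Rightarrow> real"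
  assumes "\<phi> \<in> classG" and "\<psi> \<in> classG"
    and "lower_dilation_index (\<lambda>t. \<psi> t / \<phi> t) > 0"
    and "symmetric_space E NE" and "has_fundamental_function E NE \<phi>"
    and "symmetric_space F NF" and "has_fundamental_function F NF \<psi>"
  shows "E \<subseteq> F \<and> bounded_inclusion E NE F NF \<and> inclusion_DSS E NE F NF"
proof -
  obtain C \<delta> where "0 < \<delta>" and ratio: "\<And>a. 0 < a \<Longrightarrow> a \<le> 1 \<Longrightarrow> \<psi> a / \<phi> a \<le> C * a powr \<delta>"
    using log_lipschitz.le_power_of_index_pos[OF log_lipschitz_ratio[OF assms(1,2)] assms(3)] by blast
  have "\<psi> a \<le> C * a powr \<delta> * \<phi> a" if "0 < a" "a \<le> 1" for a
    using ratio[OF that] classG_pos[OF assms(1) that] by (simp add: divide_le_eq)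
  with assms \<open>0 < \<delta>\<close> interpret symmetric_embedding E NE \<phi> F NF \<psi> C \<delta>
    by unfold_locales blast+
  show ?thesis using inclusion_bound bounded_inclusion inclusion_DSS by blast
qed

end
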